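(* Let $N$ be a positive integer and $t>-\log N$. For integers $n\ge N$ let $$\eta_n(t,N)=\sum_{k=N}^{n}\Big(\frac{1}{t+\log(k+\frac12)}-\frac{1}{H_k-\gamma+t}\Big),$$ and set $\eta_{N-1}(t,N)=0$. (1) The sequence $(\eta_n(t,N))_{n\ge N}$ is positive, strictly increasing and bounded above; hence $\eta(t,N)=\lim_{n\to\infty}\eta_n(t,N)>0$ exists. (2) For all $n\ge N$, $\eta(t,N)-\eta_{n-1}(t,N)=\eta(t,n)$ and $$\frac1{24}\int_{n+1}^\infty\frac{dx}{x^2(t+\log x)^2}\le\eta(t,n)\le\frac1{24}\int_n^\infty\frac{dx}{x^2(t+\log x)^2}.$$ (3) For all $n\ge N$, $$\frac{1}{24(n+1)(t+\log(n+1))^2}-\frac{1}{12(n+1)(t+\log(n+1))^3}<\eta(t,N)-\eta_{n-1}(t,N)<\frac{1}{24n(t+\log n)^2}.$$ Consequently $\eta(t,N)=\eta_{n-1}(t,N)+\frac{1+o(1)}{24n(\log n)^2}$ as $n\to\infty$, and $\eta(t,N)=O\!\left(\frac1{Nt^2}\right)$ as $t\to\infty$, with implied constant independent of $N$.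
   Context: $\gamma$ is the Euler–Mascheroni constant and $H_k=\sum_{j=1}^k1/j$ is the $k$-th harmonic number. *)

theory Defs
  imports "HOL-Analysis.Analysis" "HOL-Library.Landau_Symbols"
begin

text \<open>H_k is harm k, gamma is euler_mascheroni (HOL-Analysis Harmonic_Numbers).
  eta_part t N n is eta_n(t,N); for n = N - 1 the sum is empty, hence 0.\<close>

definition eta_part :: "real \<Rightarrow> nat \<Rightarrow> nat \<Rightarrow> real" where
  "eta_part t N n =
     (\<Sum>k = N..n. 1 / (t + ln (real k + 1/2)) - 1 / (harm k - euler_mascheroni + t))"

definition eta :: "real \<Rightarrow> nat \<Rightarrow> real" where
  "eta t N = lim (\<lambda>n. eta_part t N n)"

definition eta_integrand :: "real \<Rightarrow> real \<Rightarrow> real" where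
  "eta_integrand t x = 1 / (x^2 * (t + ln x)^2)"

end

theory Submission
  imports Defs "HOL-Real_Asymp.Real_Asymp"
begin

text \<open>Let \<open>d\<^sub>k = H\<^sub>k - \<gamma> - ln (k + 1/2)\<close>. Comparing \<open>d\<^sub>k - d\<^sub>k\<^sub>+\<^sub>1\<close> with the Taylor
  expansion of \<open>ln ((1 + x)/(1 - x))\<close> at \<open>x = 1/(2k + 2)\<close> and using \<open>d\<^sub>k \<longrightarrow> 0\<close> gives
  \<open>1/(24(k+1)\<^sup>2) \<le> d\<^sub>k \<le> 1/(24k(k+1))\<close>. The \<open>k\<close>-th summand equals \<open>d\<^sub>k/(c(c + d\<^sub>k))\<close> with
  \<open>c = t + ln (k + 1/2)\<close>, so it is positive and squeezed between \<open>1/24\<close> times the integrals of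
  \<open>f x = 1/(x\<^sup>2 (t + ln x)\<^sup>2)\<close> over \<open>[k+1, k+2]\<close> and over \<open>[k, k+1]\<close>. Summing from \<open>n\<close> on
  traps \<open>\<eta>(t,n)\<close> between tail integrals of \<open>f\<close>, and these are estimated through the exact
  antiderivative \<open>-1/(x (t + ln x)\<^sup>2)\<close> of \<open>f + 2f/(t + ln x)\<close>.\<close>

lemma ln_ratio_upper:
  fixes x :: real assumes x0: "0 \<le> x" and x1: "x < 1"
  shows "ln (1+x) - ln (1-x) \<le> 2*x + 2*x^3/(3*((1-x)*(1+x)))"
proof -
  define g where "g y = 2*y + 2*y^3/(3*((1-y)*(1+y))) - (ln (1+y) - ln (1-y))" for y :: real
  define g' where "g' y = 2 + (18 * (y\<^sup>2 * ((1 - y) * (1 + y))) + 12 * (y ^ 3 * y)) /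
        (9 * ((1 - y) * ((1 + y) * ((1 - y) * (1 + y))))) - (1/(1+y) + 1/(1-y))" for y :: real
  have "g 0 \<le> g x"
  proof (rule deriv_nonneg_imp_mono[where g=g and g'=g'])
    fix y assume "y \<in> {0..x}"
    hence y1: "y < 1" "0 \<le> y" using x1 by auto
    show "(g has_real_derivative g' y) (at y)"
      unfolding g_def g'_def using y1 by (auto intro!: derivative_eq_intros)
    define a where "a = (1-y)*(1+y)"
    have "y * y \<le> 1 * y" using y1 by (intro mult_right_mono) auto
    hence a: "a > 0" "a = 1 - y^2" using y1 unfolding a_def by (auto simp: algebra_simps power2_eq_square)
    have key: "18*a^2 + 18*y^2*a + 12*y^4 - 18*a \<ge> 0"
      using y1 unfolding a(2) by (simp add: algebra_simps power2_eq_square power4_eq_xxxx)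
    have "g' y = 2 + (18*(y^2*a) + 12*y^4)/(9*a^2) - 2/a"
      using y1 unfolding g'_def a_def
      by (simp add: field_simps power2_eq_square power4_eq_xxxx power3_eq_cube)
    also have "\<dots> = (18*a^2 + 18*y^2*a + 12*y^4 - 18*a) / (9*a^2)"
      using a by (simp add: field_simps power2_eq_square)
    finally show "g' y \<ge> 0" using key a by simp
  qed (use x0 in auto)
  thus ?thesis by (simp add: g_def)
qed

lemma ln_ratio_lower:
  fixes x :: real assumes x0: "0 \<le> x" and x1: "x < 1"
  shows "ln (1+x) - ln (1-x) \<ge> 2*x + 2*x^3/3"
proof -
  define g where "g y = (ln (1+y) - ln (1-y)) - (2*y + 2*y^3/3)" for y :: real
  define g' where "g' y = (1/(1+y) + 1/(1-y)) - (2 + 2*y^2)" for y :: real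
  have "g 0 \<le> g x"
  proof (rule deriv_nonneg_imp_mono[where g=g and g'=g'])
    fix y assume "y \<in> {0..x}"
    hence y1: "y < 1" "0 \<le> y" using x1 by auto
    show "(g has_real_derivative g' y) (at y)"
      unfolding g_def g'_def using y1 by (auto intro!: derivative_eq_intros)
    define a where "a = (1-y)*(1+y)"
    have "y * y \<le> 1 * y" using y1 by (intro mult_right_mono) auto
    hence a: "a > 0" "a = 1 - y^2" using y1 unfolding a_def by (auto simp: algebra_simps power2_eq_square)
    have "(2 + 2*y^2) * a = 2 - 2*y^4" unfolding a(2) by (simp add: algebra_simps power2_eq_square power4_eq_xxxx)
    hence "(2 + 2*y^2) * a \<le> 2" by simp
    hence "2 + 2*y^2 \<le> 2/a" using a(1) by (simp add: field_simps)
    moreover have "1/(1+y) + 1/(1-y) = 2/a" using y1 unfolding a_def by (simp add: field_simps)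
    ultimately show "g' y \<ge> 0" unfolding g'_def by simp
  qed (use x0 in auto)
  thus ?thesis by (simp add: g_def)
qed

lemma nonneg_of_decreasing_tendsto_zero:
  fixes e :: "nat \<Rightarrow> real"
  assumes "\<And>j. j \<ge> k \<Longrightarrow> e (Suc j) \<le> e j" and "e \<longlonglongrightarrow> 0"
  shows "e k \<ge> 0"
proof -
  have "decseq (\<lambda>j. e (j + k))" by (rule decseq_SucI) (simp add: assms(1))
  moreover have "(\<lambda>j. e (j + k)) \<longlonglongrightarrow> 0" using assms(2) by (rule LIMSEQ_ignore_initial_segment)
  ultimately show ?thesis using decseq_ge[of "\<lambda>j. e (j + k)" 0 0] by simp
qed

definition harm_defect :: "nat \<Rightarrow> real" where
  "harm_defect k = harm k - euler_mascheroni - ln (real k + 1/2)"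

lemma harm_defect_LIMSEQ: "harm_defect \<longlonglongrightarrow> 0"
proof -
  have "(\<lambda>n. harm n - ln (real n) - euler_mascheroni) \<longlonglongrightarrow> 0"
    using euler_mascheroni_LIMSEQ by (simp add: LIM_zero)
  moreover have "(\<lambda>n. ln (real n + 1/2) - ln (real n)) \<longlonglongrightarrow> 0" by real_asymp
  ultimately have "(\<lambda>n. (harm n - ln (real n) - euler_mascheroni) - (ln (real n + 1/2) - ln (real n)))
      \<longlonglongrightarrow> 0 - 0"
    by (intro tendsto_diff)
  thus ?thesis unfolding harm_defect_def by (simp add: algebra_simps)
qed

lemma harm_defect_diff:
  assumes "x = 1/(2*(real k + 1))"
  shows "harm_defect k - harm_defect (Suc k) = (ln (1+x) - ln (1-x)) - 2*x"
proof -
  have x0: "0 < x" "x \<le> 1/2" unfolding assms by (auto simp: field_simps)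
  have a: "real k + 3/2 = (real k + 1) * (1+x)" "real k + 1/2 = (real k + 1) * (1-x)"
    using assms by (auto simp: field_simps)
  have "ln (real k + 3/2) = ln (real k + 1) + ln (1+x)"
       "ln (real k + 1/2) = ln (real k + 1) + ln (1-x)"
    unfolding a using x0 by (auto simp: ln_mult)
  moreover have "harm (Suc k) = harm k + 2*x" using assms by (simp add: harm_Suc field_simps)
  moreover have "ln (real (Suc k) + 1/2) = ln (real k + 3/2)" by (simp add: add_ac)
  ultimately show ?thesis unfolding harm_defect_def by linarith
qed

lemma harm_defect_upper:
  assumes k: "k \<ge> 1"
  shows "harm_defect k \<le> 1/(24 * real k * (real k + 1))"
proof -
  define e where "e j = 1/(24 * real j * (real j + 1)) - harm_defect j" for j
  have "e k \<ge> 0"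
  proof (rule nonneg_of_decreasing_tendsto_zero)
    have "(\<lambda>j. 1/(24 * real j * (real j + 1))) \<longlonglongrightarrow> 0" by real_asymp
    from tendsto_diff[OF this harm_defect_LIMSEQ] show "e \<longlonglongrightarrow> 0" unfolding e_def by simp
  next
    fix j assume j: "j \<ge> k"
    define x where "x = 1/(2*(real j + 1))"
    define m where "m = real j + 1"
    have m: "m \<ge> 2" using j k unfolding m_def by simp
    have x: "0 \<le> x" "x < 1" unfolding x_def by (auto simp: field_simps)
    have "harm_defect j - harm_defect (Suc j) \<le> 2*x^3/(3*((1-x)*(1+x)))"
      using harm_defect_diff[OF x_def] ln_ratio_upper[OF x] by simp
    also have "\<dots> = 1/(3*m*(4*m^2-1))" unfolding x_def m_def[symmetric]
      using m by (simp add: field_simps power3_eq_cube power2_eq_square)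
    also have "\<dots> \<le> 1/(3*m*(4*m^2-4))"
      using m mult_mono[OF m m]
      by (intro divide_left_mono mult_left_mono mult_pos_pos) (auto simp: power2_eq_square)
    also have "\<dots> = 1/(24 * (m-1) * m) - 1/(24 * m * (m + 1))"
    proof -
      have n: "m \<noteq> 0" "m - 1 \<noteq> 0" "m + 1 \<noteq> 0" using m by auto
      have g: "1/(24*a*m) - 1/(24*m*b) = (b-a)/(24*(a*m*b))" if "a \<noteq> 0" "b \<noteq> 0" for a b
        using that n by (simp add: field_simps)
      have h: "3*m*(4*m^2-4) = 24*((m-1)*m*(m+1)) / 2" by (simp add: algebra_simps power2_eq_square)
      show ?thesis unfolding g[OF n(2) n(3)] h by simp
    qed
    also have "\<dots> = 1/(24 * real j * (real j + 1)) - 1/(24 * real (Suc j) * (real (Suc j) + 1))"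
      unfolding m_def by simp
    finally show "e (Suc j) \<le> e j" unfolding e_def by simp
  qed
  thus ?thesis unfolding e_def by simp
qed

lemma harm_defect_lower: "harm_defect k \<ge> 1/(24 * (real k + 1)^2)"
proof -
  define e where "e j = harm_defect j - 1/(24 * (real j + 1)^2)" for j
  have "e k \<ge> 0"
  proof (rule nonneg_of_decreasing_tendsto_zero)
    have "(\<lambda>j. 1/(24 * (real j + 1)^2)) \<longlonglongrightarrow> 0" by real_asymp
    from tendsto_diff[OF harm_defect_LIMSEQ this] show "e \<longlonglongrightarrow> 0" unfolding e_def by simp
  next
    fix j
    define x where "x = 1/(2*(real j + 1))"
    define m where "m = real j + 1"
    have m: "m \<ge> 1" unfolding m_def by simp
    have x: "0 \<le> x" "x < 1" unfolding x_def by (auto simp: field_simps)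
    have "(m+1)^2 - m^2 = 2*m+1" by (simp add: power2_eq_square algebra_simps)
    moreover have "1/(24 * m^2) - 1/(24 * (m+1)^2) = ((m+1)^2 - m^2)/(24*m^2*(m+1)^2)"
      using m by (simp add: field_simps)
    ultimately have "1/(24 * m^2) - 1/(24 * (m+1)^2) = (2*m+1)/(24*m^2*(m+1)^2)" by simp
    also have "\<dots> \<le> 1/(12*m^3)"
    proof -
      have "24*m^2*(m+1)^2 - (2*m+1) * (12*m^3) = 12*m^2*(3*m+2)"
        by (simp add: power2_eq_square power3_eq_cube algebra_simps)
      also have "\<dots> \<ge> 0" using m by simp
      finally have le: "(2*m+1) * (12*m^3) \<le> 24*m^2*(m+1)^2" by simp
      have frac: "a/D \<le> 1/E" if "0 < D" "0 < E" "a*E \<le> D" for a D E :: real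
        using that by (simp add: divide_simps)
      show ?thesis by (rule frac[OF _ _ le]) (use m in auto)
    qed
    also have "\<dots> = 2*x^3/3" unfolding x_def m_def[symmetric]
      by (simp add: field_simps power3_eq_cube)
    also have "\<dots> \<le> harm_defect j - harm_defect (Suc j)"
      using harm_defect_diff[OF x_def] ln_ratio_lower[OF x] by simp
    finally have step: "1/(24 * m^2) - 1/(24 * (m+1)^2) \<le> harm_defect j - harm_defect (Suc j)" .
    have eq: "real (Suc j) + 1 = m + 1" "real j + 1 = m" by (simp_all add: m_def)
    show "e (Suc j) \<le> e j" unfolding e_def eq using step by linarith
  qed
  thus ?thesis unfolding e_def by simp
qed

lemma harm_defect_pos: "harm_defect k > 0"
  using harm_defect_lower[of k] by (smt (verit) divide_pos_pos zero_less_power of_nat_0_le_iff)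


lemma shifted_ln_pos_mono:
  fixes a x t :: real
  assumes "0 < a" "a \<le> x" "t + ln a > 0"
  shows "t + ln x > 0"
proof -
  have "ln a \<le> ln x" using assms by simp
  thus ?thesis using assms(3) by linarith
qed

lemma eta_integrand_pos: "0 < x \<Longrightarrow> t + ln x > 0 \<Longrightarrow> eta_integrand t x > 0"
  unfolding eta_integrand_def by simp

lemma eta_integrand_antimono:
  assumes x: "0 < x" "t + ln x > 0" and xy: "x \<le> y"
  shows "eta_integrand t y \<le> eta_integrand t x"
    and "eta_integrand t y / (t + ln y) \<le> eta_integrand t x / (t + ln x)"
proof -
  have l: "t + ln x \<le> t + ln y" using x xy by simp
  have "x^2 * (t + ln x)^2 \<le> y^2 * (t + ln y)^2"
    using x l xy by (intro mult_mono power_mono) auto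
  moreover have "0 < x^2 * (t + ln x)^2" using x by simp
  ultimately show le: "eta_integrand t y \<le> eta_integrand t x"
    unfolding eta_integrand_def by (intro divide_left_mono) auto
  show "eta_integrand t y / (t + ln y) \<le> eta_integrand t x / (t + ln x)"
    using le l x eta_integrand_pos[OF x] by (intro frac_le) (auto intro: less_imp_le)
qed

lemma continuous_on_eta_integrand:
  assumes a: "0 < a" "t + ln a > 0"
  shows "continuous_on {a..} (eta_integrand t)"
    and "continuous_on {a..} (\<lambda>x. eta_integrand t x / (t + ln x))"
proof -
  have pos: "a \<le> x \<Longrightarrow> x > 0" "a \<le> x \<Longrightarrow> t + ln x > 0" for x
    using a shifted_ln_pos_mono[OF a(1) _ a(2)] by auto
  show "continuous_on {a..} (eta_integrand t)"
    unfolding eta_integrand_def by (intro continuous_intros) (auto dest: pos)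
  show "continuous_on {a..} (\<lambda>x. eta_integrand t x / (t + ln x))"
    unfolding eta_integrand_def by (intro continuous_intros) (auto dest: pos)
qed

lemma eta_integrand_antiderivative:
  assumes "x > 0" "t + ln x > 0"
  shows "((\<lambda>x. - 1/(x * (t + ln x)^2)) has_real_derivative
           (eta_integrand t x + 2 * (eta_integrand t x / (t + ln x)))) (at x)"
proof -
  have D: "((\<lambda>x. - 1/(x * (t + ln x)^2)) has_real_derivative
     (-((- (2 * t) - 2 * ln x - (t + ln x)^2) / (x * (t + ln x)^2 * (x * (t + ln x)^2))))) (at x)"
    using assms by (auto intro!: derivative_eq_intros)
  define v where "v = t + ln x"
  have v: "v > 0" using assms v_def by simp
  have ee: "-(2 * t) - 2 * ln x = -2 * v" unfolding v_def by simp
  have "-((- (2 * t) - 2 * ln x - (t + ln x)^2) / (x * (t + ln x)^2 * (x * (t + ln x)^2)))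
     = eta_integrand t x + 2 * (eta_integrand t x / (t + ln x))"
    unfolding ee eta_integrand_def v_def[symmetric] using v assms(1)
    by (simp add: field_simps power2_eq_square)
  with D show ?thesis by simp
qed

lemma has_integral_eta_integrand_combination:
  assumes c: "0 < c" "t + ln c > 0" and "c \<le> b"
  shows "((\<lambda>x. eta_integrand t x + 2 * (eta_integrand t x / (t + ln x))) has_integral
           (1/(c * (t + ln c)^2) - 1/(b * (t + ln b)^2))) {c..b}"
proof -
  have "((\<lambda>x. eta_integrand t x + 2 * (eta_integrand t x / (t + ln x))) has_integral
           ((- 1/(b * (t + ln b)^2)) - (- 1/(c * (t + ln c)^2)))) {c..b}"
  proof (rule fundamental_theorem_of_calculus[OF \<open>c \<le> b\<close>])
    fix x assume "x \<in> {c..b}"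
    hence "x > 0" "t + ln x > 0" using c shifted_ln_pos_mono[OF c(1) _ c(2)] by auto
    from eta_integrand_antiderivative[OF this]
    show "((\<lambda>x. - 1/(x * (t + ln x)^2)) has_vector_derivative
            (eta_integrand t x + 2 * (eta_integrand t x / (t + ln x)))) (at x within {c..b})"
      by (simp add: has_real_derivative_iff_has_vector_derivative has_vector_derivative_at_within)
  qed
  thus ?thesis by simp
qed

lemma improper_integral_Ici_of_bounded_nonneg:
  fixes p :: "real \<Rightarrow> real"
  assumes cont: "continuous_on {a..} p" and nn: "\<And>x. x \<ge> a \<Longrightarrow> p x \<ge> 0"
    and bnd: "\<And>b. b \<ge> a \<Longrightarrow> integral {a..b} p \<le> B"
  shows "p integrable_on {a..}"
    and "(\<lambda>k. integral {a..a + real k} p) \<longlonglongrightarrow> integral {a..} p"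
proof -
  have int: "p integrable_on {c..b}" if "c \<ge> a" for c b
    by (rule integrable_continuous_interval, rule continuous_on_subset[OF cont]) (use that in auto)
  define f where "f = (\<lambda>n x. if x \<in> {a..a + real n} then p x else 0)"
  have has_integral_f: "(f n has_integral (integral {a..a + real n} p)) {a..}" for n
    unfolding f_def
    by (metis (no_types, lifting) ext Icc_subset_Ici_iff order.refl
        has_integral_restrict int integrable_integral)
  hence eqf: "integral {a..} (f n) = integral {a..a + real n} p" for n
    using integral_unique by blast
  have *: "p integrable_on {a..} \<and> (\<lambda>n. integral {a..} (f n)) \<longlonglongrightarrow> integral {a..} p"
  proof (intro monotone_convergence_increasing allI ballI)
    show "f n integrable_on {a..}" for n using has_integral_f by blast
    show "f n x \<le> f (Suc n) x" for n x using nn by (auto simp: f_def)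
  next
    fix x :: real assume x: "x \<in> {a..}"
    have "eventually (\<lambda>n. real n \<ge> x - a) at_top"
      by (meson eventually_sequentiallyI nat_ceiling_le_eq)
    with x have "eventually (\<lambda>n. f n x = p x) at_top"
      by (auto simp add: eventually_mono f_def)
    thus "(\<lambda>n. f n x) \<longlonglongrightarrow> p x" by (simp add: tendsto_eventually)
  next
    have "integral {a..a + real n} p \<ge> 0" for n
      by (rule integral_nonneg[OF int]) (auto intro: nn)
    hence "norm (integral {a..} (f n)) \<le> B" for n using bnd[of "a + real n"] by (simp add: eqf)
    thus "bounded (range (\<lambda>k. integral {a..} (f k)))"
      by (metis (no_types, lifting) boundedI rangeE)
  qed
  show "p integrable_on {a..}" using * by blast
  show "(\<lambda>k. integral {a..a + real k} p) \<longlonglongrightarrow> integral {a..} p"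
    using * unfolding eqf by blast
qed

lemma sums_integral_unit_intervals:
  fixes p :: "real \<Rightarrow> real"
  assumes int: "\<And>b. p integrable_on {a..b}"
    and lim: "(\<lambda>k. integral {a..a + real k} p) \<longlonglongrightarrow> I"
  shows "(\<lambda>j. integral {a + real j..a + real j + 1} p) sums I"
proof -
  have "(\<Sum>j<k. integral {a + real j..a + real j + 1} p) = integral {a..a + real k} p" for k
  proof (induction k)
    case (Suc k)
    have "integral {a..a + real k} p + integral {a + real k..a + real k + 1} p
        = integral {a..a + real k + 1} p"
      by (rule Henstock_Kurzweil_Integration.integral_combine) (auto intro: int)
    moreover have "a + real (Suc k) = a + real k + 1" by simp
    ultimately show ?case unfolding sum.lessThan_Suc Suc.IH by (simp only:)
  qed simp
  thus ?thesis unfolding sums_def using lim by simp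
qed

lemma eta_integrand_improper:
  assumes a: "0 < a" "t + ln a > 0"
  defines "Q \<equiv> \<lambda>x. eta_integrand t x / (t + ln x)"
  shows "eta_integrand t integrable_on {a..}" and "Q integrable_on {a..}"
    and "(\<lambda>j. integral {a + real j..a + real j + 1} (eta_integrand t)) sums integral {a..} (eta_integrand t)"
    and "(\<lambda>k. integral {a..a + real k} (eta_integrand t)) \<longlonglongrightarrow> integral {a..} (eta_integrand t)"
    and "(\<lambda>k. integral {a..a + real k} Q) \<longlonglongrightarrow> integral {a..} Q"
proof -
  define F where "F = eta_integrand t"
  have pos: "F x > 0" "Q x > 0" if "a \<le> x" for x
    using shifted_ln_pos_mono[OF a(1) that a(2)] eta_integrand_pos[of x t] a that
    unfolding F_def Q_def by auto
  have comb: "((\<lambda>x. F x + 2 * Q x) has_integral (1/(a * (t + ln a)^2) - 1/(b * (t + ln b)^2))) {a..b}"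
    if "a \<le> b" for b
    using has_integral_eta_integrand_combination[OF a that] unfolding F_def Q_def .
  have cont: "continuous_on {a..} F" "continuous_on {a..} Q"
    using continuous_on_eta_integrand[OF a] unfolding F_def Q_def by auto
  have sub: "{a..b} \<subseteq> {a..}" for b by auto
  have int: "F integrable_on {a..b}" "Q integrable_on {a..b}" for b
    using continuous_on_subset[OF cont(1) sub] continuous_on_subset[OF cont(2) sub]
    by (auto intro: integrable_continuous_interval)
  have bnd: "integral {a..b} p \<le> 1/(a * (t + ln a)^2)" if "p \<in> {F, Q}" "a \<le> b" for p b
  proof -
    have "integral {a..b} p \<le> 1/(a * (t + ln a)^2) - 1/(b * (t + ln b)^2)"
      by (rule has_integral_le[OF integrable_integral comb[OF \<open>a \<le> b\<close>]])
         (use that int pos in \<open>auto simp: less_imp_le\<close>)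
    moreover have "1/(b * (t + ln b)^2) \<ge> 0" using a that by simp
    ultimately show ?thesis by linarith
  qed
  have nn: "0 \<le> F x" "0 \<le> Q x" if "a \<le> x" for x using pos[OF that] by simp_all
  have bndF: "integral {a..b} F \<le> 1/(a * (t + ln a)^2)"
    and bndQ: "integral {a..b} Q \<le> 1/(a * (t + ln a)^2)" if "a \<le> b" for b
    using bnd[OF _ that] by simp_all
  note IF = improper_integral_Ici_of_bounded_nonneg[OF cont(1) nn(1) bndF]
   and IQ = improper_integral_Ici_of_bounded_nonneg[OF cont(2) nn(2) bndQ]
  show "eta_integrand t integrable_on {a..}" "Q integrable_on {a..}"
    and "(\<lambda>k. integral {a..a + real k} (eta_integrand t)) \<longlonglongrightarrow> integral {a..} (eta_integrand t)"
    and "(\<lambda>k. integral {a..a + real k} Q) \<longlonglongrightarrow> integral {a..} Q"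
    using IF IQ unfolding F_def by simp_all
  show "(\<lambda>j. integral {a + real j..a + real j + 1} (eta_integrand t)) sums integral {a..} (eta_integrand t)"
    using sums_integral_unit_intervals[OF int(1) IF(2)] unfolding F_def .
qed

lemma integral_eta_integrand_identity:
  assumes a: "0 < a" "t + ln a > 0"
  defines "Q \<equiv> \<lambda>x. eta_integrand t x / (t + ln x)"
  shows "integral {a..} (eta_integrand t) + 2 * integral {a..} Q = 1 / (a * (t + ln a)^2)"
proof -
  define F where "F = eta_integrand t"
  define G where "G b = 1/(a * (t + ln a)^2) - 1/(b * (t + ln b)^2)" for b
  note imp = eta_integrand_improper[OF a, folded Q_def F_def]
  have partial: "integral {a..a + real k} F + 2 * integral {a..a + real k} Q = G (a + real k)" for k
  proof -
    have "a \<le> a + real k" by simp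
    from has_integral_eta_integrand_combination[OF a this]
    have "integral {a..a + real k} (\<lambda>x. F x + 2 * Q x) = G (a + real k)"
      unfolding F_def Q_def G_def by (rule integral_unique)
    moreover have "F integrable_on {a..a + real k}" "Q integrable_on {a..a + real k}"
      by (rule integrable_on_subinterval[OF imp(1)], simp)
         (rule integrable_on_subinterval[OF imp(2)], simp)
    ultimately show ?thesis by (simp add: integral_add integrable_on_cmult_left)
  qed
  have "(\<lambda>k. G (a + real k)) \<longlonglongrightarrow> 1/(a * (t + ln a)^2) - 0"
    unfolding G_def by (intro tendsto_intros) real_asymp
  moreover have "(\<lambda>k. G (a + real k)) \<longlonglongrightarrow> integral {a..} F + 2 * integral {a..} Q"
    unfolding partial[symmetric] by (intro tendsto_intros imp(4,5))
  ultimately show ?thesis unfolding F_def by (simp add: LIMSEQ_unique)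
qed

lemma integral_eta_integrand_ratio_bounds:
  assumes a: "0 < a" "t + ln a > 0"
  defines "Q \<equiv> \<lambda>x. eta_integrand t x / (t + ln x)"
  shows "0 < integral {a..} Q"
    and "integral {a..} Q \<le> integral {a..} (eta_integrand t) / (t + ln a)"
proof -
  note imp = eta_integrand_improper[OF a, folded Q_def]
  have pos: "0 < x" "t + ln x > 0" "0 < Q x" if "a \<le> x" for x
    using shifted_ln_pos_mono[OF a(1) that a(2)] eta_integrand_pos[of x t] a that
    unfolding Q_def by auto
  have intQ: "Q integrable_on {a..a+1}"
    using imp(2) by (rule integrable_on_subinterval) auto
  have "0 < integral {a..a+1} (\<lambda>x. Q (a+1))" using pos[of "a+1"] by simp
  also have "\<dots> \<le> integral {a..a+1} Q"
  proof (rule integral_le[OF integrable_const_ivl intQ])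
    fix x assume x: "x \<in> {a..a+1}"
    thus "Q (a+1) \<le> Q x" unfolding Q_def using pos[of x] by (intro eta_integrand_antimono(2)) auto
  qed
  also have "\<dots> \<le> integral {a..} Q"
    by (rule integral_subset_le[OF _ intQ imp(2)]) (auto simp: less_imp_le pos)
  finally show "0 < integral {a..} Q" .
  have "integral {a..} Q \<le> integral {a..} (\<lambda>x. eta_integrand t x / (t + ln a))"
  proof (rule integral_le[OF imp(2) integrable_on_divide[OF imp(1)]])
    fix x assume "x \<in> {a..}"
    hence "0 < eta_integrand t x" "t + ln a \<le> t + ln x"
      using pos eta_integrand_pos by (auto simp: a(1))
    thus "Q x \<le> eta_integrand t x / (t + ln a)" unfolding Q_def using a by (intro divide_left_mono) auto
  qed
  thus "integral {a..} Q \<le> integral {a..} (eta_integrand t) / (t + ln a)" by simp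
qed

lemma integral_eta_integrand_bounds:
  assumes a: "0 < a" "t + ln a > 0"
  shows "1/(a * (t + ln a)^2) - 2/(a * (t + ln a)^3) < integral {a..} (eta_integrand t)"
    and "integral {a..} (eta_integrand t) < 1/(a * (t + ln a)^2)"
proof -
  define u I J where "u = t + ln a" and "I = integral {a..} (eta_integrand t)"
    and "J = integral {a..} (\<lambda>x. eta_integrand t x / (t + ln x))"
  have sum_eq: "I + 2 * J = 1/(a * u^2)"
    using integral_eta_integrand_identity[OF a] unfolding I_def J_def u_def .
  have J: "0 < J" "J \<le> I / u"
    using integral_eta_integrand_ratio_bounds[OF a] unfolding I_def J_def u_def by auto
  have u: "u > 0" using a unfolding u_def by auto
  have up: "I < 1/(a * u^2)" using sum_eq J by linarith
  have "J < 1/(a * u^2) / u" using J up u by (smt (verit) divide_strict_right_mono)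
  hence "J < 1/(a * u^3)" by (simp add: power2_eq_square power3_eq_cube mult.assoc)
  hence "1/(a * u^2) - 2/(a * u^3) < I" using sum_eq by simp
  with up show "1/(a * (t + ln a)^2) - 2/(a * (t + ln a)^3) < integral {a..} (eta_integrand t)"
    and "integral {a..} (eta_integrand t) < 1/(a * (t + ln a)^2)"
    unfolding I_def u_def by auto
qed

definition eta_term :: "real \<Rightarrow> nat \<Rightarrow> real" where
  "eta_term t k = 1 / (t + ln (real k + 1/2)) - 1 / (harm k - euler_mascheroni + t)"

lemma eta_part_eq_sum: "eta_part t N n = sum (eta_term t) {N..n}"
  unfolding eta_part_def eta_term_def by simp

lemma eta_term_eq_harm_defect:
  assumes c: "t + ln (real k + 1/2) > 0"
  shows "eta_term t k = harm_defect k /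
           ((t + ln (real k + 1/2)) * ((t + ln (real k + 1/2)) + harm_defect k))"
proof -
  define c where "c = t + ln (real k + 1/2)"
  have e: "harm k - euler_mascheroni + t = c + harm_defect k" unfolding c_def harm_defect_def by simp
  have "c > 0" "c + harm_defect k > 0" using c harm_defect_pos[of k] unfolding c_def by auto
  thus ?thesis unfolding eta_term_def c_def[symmetric] e by (simp add: field_simps)
qed

lemma eta_term_pos: "t + ln (real k + 1/2) > 0 \<Longrightarrow> eta_term t k > 0"
  using eta_term_eq_harm_defect harm_defect_pos[of k] by simp

lemma eta_term_upper:
  assumes c: "t + ln (real k + 1/2) > 0" and k: "k \<ge> 1"
  shows "eta_term t k \<le> 1 / (24 * real k * (real k + 1) * (t + ln (real k + 1/2))^2)"
proof -
  define c where "c = t + ln (real k + 1/2)"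
  have p: "c > 0" using c unfolding c_def by auto
  have "eta_term t k = harm_defect k / (c * (c + harm_defect k))"
    using eta_term_eq_harm_defect[OF c] unfolding c_def .
  also have "\<dots> \<le> harm_defect k / c^2"
    using p harm_defect_pos[of k] by (intro divide_left_mono) (auto simp: power2_eq_square)
  also have "\<dots> \<le> (1/(24 * real k * (real k + 1))) / c^2"
    using harm_defect_upper[OF k] p by (intro divide_right_mono) auto
  finally show ?thesis unfolding c_def by simp
qed

lemma eta_term_lower:
  assumes c: "t + ln (real k + 1/2) > 0" and k: "k \<ge> 1"
  shows "eta_term t k \<ge> eta_integrand t (real k + 1) / 24"
proof -
  define c where "c = t + ln (real k + 1/2)"
  define w where "w = t + ln (real k + 1)"
  have p: "c > 0" using c unfolding c_def by auto
  have "ln ((real k + 1/2) / (real k + 1)) \<le> (real k + 1/2) / (real k + 1) - 1"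
    by (rule ln_le_minus_one) simp
  moreover have "ln ((real k + 1/2) / (real k + 1)) = ln (real k + 1/2) - ln (real k + 1)"
    by (rule ln_divide_pos) auto
  moreover have "(real k + 1/2) / (real k + 1) - 1 = - 1 / (2 * (real k + 1))"
    by (simp add: field_simps)
  moreover have "harm_defect k \<le> 1 / (2 * (real k + 1))"
  proof -
    have "24 * 1 * (real k + 1) \<le> 24 * real k * (real k + 1)"
      using k by (intro mult_right_mono mult_left_mono) auto
    hence "1/(24 * real k * (real k + 1)) \<le> 1 / (2 * (real k + 1))"
      using k by (intro divide_left_mono) auto
    thus ?thesis using harm_defect_upper[OF k] by simp
  qed
  ultimately have cw: "c + harm_defect k \<le> w" unfolding c_def w_def by simp
  have "eta_integrand t (real k + 1) / 24 = 1 / (24 * (real k + 1)^2) / w^2"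
    unfolding eta_integrand_def w_def by simp
  also have "\<dots> \<le> harm_defect k / w^2"
    using harm_defect_lower[of k] by (intro divide_right_mono) auto
  also have "\<dots> \<le> harm_defect k / (c * (c + harm_defect k))"
    using p harm_defect_pos[of k] cw
    by (intro divide_left_mono) (auto simp: power2_eq_square intro!: mult_mono)
  also have "\<dots> = eta_term t k" using eta_term_eq_harm_defect[OF c] unfolding c_def by simp
  finally show ?thesis .
qed

lemma inv_square_ge_tangent:
  fixes z w :: real assumes z: "z > 0" and w: "w > 0"
  shows "1/w^2 - 2*(z - w)/w^3 \<le> 1/z^2"
proof -
  have "w^3 - (3*w - 2*z) * z^2 = (w-z)^2 * (w + 2*z)"
    by (simp add: power2_eq_square power3_eq_cube algebra_simps)
  also have "\<dots> \<ge> 0" using z w by simp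
  finally have "(3*w - 2*z) * z^2 \<le> w^3" by simp
  hence "(3*w - 2*z)/w^3 \<le> 1/z^2" using z w by (simp add: divide_simps mult.commute)
  moreover have "1/w^2 - 2*(z - w)/w^3 = (3*w - 2*z)/w^3"
    using w by (simp add: field_simps power2_eq_square power3_eq_cube)
  ultimately show ?thesis by simp
qed

text \<open>Linearising \<open>1/(t + ln x)\<^sup>2\<close> around \<open>x = m\<close> (using \<open>ln (x/m) \<le> x/m - 1\<close>) gives a
  minorant of the integrand whose integral is elementary.\<close>

lemma eta_integrand_ge_tangent:
  assumes x: "0 < x" "t + ln x > 0" and m: "0 < m" "t + ln m > 0"
  shows "(1/(t + ln m)^2 - 2*(x/m - 1)/(t + ln m)^3) / x^2 \<le> eta_integrand t x"
proof -
  define z w where "z = t + ln x" and "w = t + ln m"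
  have "z - w = ln (x / m)" unfolding z_def w_def using x m by (simp add: ln_div)
  also have "\<dots> \<le> x/m - 1" using x m by (intro ln_le_minus_one) simp
  finally have "1/w^2 - 2*(x/m - 1)/w^3 \<le> 1/w^2 - 2*(z - w)/w^3"
    using m unfolding w_def by (simp add: divide_right_mono)
  also have "\<dots> \<le> 1/z^2" using x m unfolding z_def w_def by (intro inv_square_ge_tangent) auto
  finally have "(1/w^2 - 2*(x/m - 1)/w^3) / x^2 \<le> (1/z^2) / x^2"
    by (rule divide_right_mono) simp
  also have "(1/z^2) / x^2 = eta_integrand t x" unfolding eta_integrand_def z_def by simp
  finally show ?thesis unfolding w_def .
qed

lemma has_integral_affine_over_square:
  fixes a b c d :: real
  assumes "0 < c" "c \<le> d"
  shows "((\<lambda>x. (a + b*x) / x^2) has_integral (a*(1/c - 1/d) + b*(ln d - ln c))) {c..d}"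
proof -
  have "((\<lambda>x. (a + b*x) / x^2) has_integral ((- a/d + b * ln d) - (- a/c + b * ln c))) {c..d}"
  proof (rule fundamental_theorem_of_calculus[OF assms(2)])
    fix x assume "x \<in> {c..d}"
    hence "x > 0" using assms by auto
    hence "((\<lambda>x. - a/x + b * ln x) has_real_derivative (a + b*x) / x^2) (at x)"
      by (auto intro!: derivative_eq_intros simp: field_simps power2_eq_square)
    thus "((\<lambda>x. - a/x + b * ln x) has_vector_derivative (a + b*x) / x^2) (at x within {c..d})"
      by (simp add: has_real_derivative_iff_has_vector_derivative has_vector_derivative_at_within)
  qed
  thus ?thesis by (simp add: algebra_simps)
qed

lemma ln_Suc_diff_le:
  assumes k: "k \<ge> 1"
  shows "ln (real k + 1) - ln (real k) \<le> (real k + 1/2) / (real k * (real k + 1))"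
proof -
  define y where "y = 1 / (2 * real k + 1)"
  define m where "m = real k + 1/2"
  have k1: "real k \<ge> 1" using k by simp
  have y: "0 \<le> y" "y < 1" using k1 unfolding y_def by (auto simp: field_simps)
  have m: "m > 0" unfolding m_def by simp
  have e: "real k + 1 = m * (1 + y)" "real k = m * (1 - y)"
    unfolding m_def y_def by (auto simp: field_simps)
  have "ln (real k + 1) - ln (real k) = ln (1 + y) - ln (1 - y)"
    using e m y by (simp add: ln_mult)
  also have "\<dots> \<le> 2*y + 2*y^3/(3*((1-y)*(1+y)))" by (rule ln_ratio_upper[OF y])
  also have "\<dots> \<le> 2*y/((1-y)*(1+y))"
  proof -
    define P where "P = (1-y)*(1+y)"
    have "y * y \<le> 1 * y" using y by (intro mult_right_mono) auto
    hence P: "P > 0" "P = 1 - y^2" using y unfolding P_def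
      by (auto simp: power2_eq_square algebra_simps)
    have "2*y + 2*y^3/(3*P) = (2*y*P + 2*y^3/3)/P" using P by (simp add: field_simps)
    also have "\<dots> \<le> (2*y)/P"
    proof (rule divide_right_mono)
      have "2*y*P + 2*y^3/3 = 2*y - (4/3)*y^3"
        unfolding P(2) by (simp add: algebra_simps power2_eq_square power3_eq_cube)
      thus "2*y*P + 2*y^3/3 \<le> 2*y" using y by simp
    qed (use P in simp)
    finally show ?thesis unfolding P_def .
  qed
  also have "\<dots> = (real k + 1/2) / (real k * (real k + 1))"
  proof -
    define K where "K = real k"
    have p: "2*K+1 > 0" "2*K > 0" "2*K+2 > 0" using k1 unfolding K_def by simp_all
    have "1 - y = (2*K)/(2*K+1)" "1 + y = (2*K+2)/(2*K+1)"
      unfolding y_def K_def[symmetric] using p by (simp_all add: field_simps)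
    hence "2*y/((1-y)*(1+y)) = 2*(2*K+1)/((2*K)*(2*K+2))"
      unfolding y_def K_def[symmetric] using p by (simp add: divide_simps)
    also have "\<dots> = (K + 1/2)/(K*(K+1))"
      using p by (simp add: divide_simps) (simp add: algebra_simps)
    finally show ?thesis unfolding K_def .
  qed
  finally show ?thesis .
qed

lemma integral_eta_integrand_unit_lower:
  assumes k: "k \<ge> 1" and t: "t + ln (real k) > 0"
  shows "integral {real k..real k + 1} (eta_integrand t) \<ge>
           1 / (real k * (real k + 1) * (t + ln (real k + 1/2))^2)"
proof -
  define m w where "m = real k + 1/2" and "w = t + ln m"
  have k1: "real k \<ge> 1" using k by simp
  have m: "m > 0" unfolding m_def by simp
  have w: "w > 0" unfolding w_def m_def by (rule shifted_ln_pos_mono[OF _ _ t]) (use k1 in auto)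
  define g0 g1 where "g0 = 1 / w^2" and "g1 = - 2 / (m * w^3)"
  have intf: "eta_integrand t integrable_on {real k..real k + 1}"
    by (rule integrable_continuous_interval,
        rule continuous_on_subset[OF continuous_on_eta_integrand(1)[of "real k" t]])
       (use t k1 in auto)
  define L X where "L = ln (real k + 1) - ln (real k)" and "X = 1 / (real k * (real k + 1))"
  have "((\<lambda>x. ((g0 - g1*m) + g1*x) / x^2) has_integral
      ((g0 - g1*m) * (1/real k - 1/(real k + 1)) + g1 * L)) {real k..real k + 1}"
    unfolding L_def by (rule has_integral_affine_over_square) (use k1 in auto)
  hence "(g0 - g1*m) * (1/real k - 1/(real k + 1)) + g1 * L \<le> integral {real k..real k + 1} (eta_integrand t)"
  proof (rule has_integral_le[OF _ integrable_integral[OF intf]])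
    fix x assume x: "x \<in> {real k..real k + 1}"
    have "t + ln x > 0" by (rule shifted_ln_pos_mono[OF _ _ t]) (use x k1 in auto)
    moreover have "(g0 - g1*m) + g1*x = 1/w^2 - 2*(x/m - 1)/w^3"
      unfolding g0_def g1_def using m w by (simp add: field_simps)
    ultimately show "((g0 - g1*m) + g1*x) / x^2 \<le> eta_integrand t x"
      using eta_integrand_ge_tangent[of x t m] x k1 m w unfolding w_def by auto
  qed
  moreover have "1/real k - 1/(real k + 1) = X"
    unfolding X_def using k1 by (simp add: field_simps)
  moreover have "g1 * (L - m * X) \<ge> 0"
  proof -
    have "g1 < 0" unfolding g1_def using m w by simp
    moreover have "L - m * X \<le> 0"
      using ln_Suc_diff_le[OF k] unfolding m_def L_def X_def by simp
    ultimately show ?thesis by (simp add: mult_nonpos_nonpos less_imp_le)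
  qed
  moreover have "g0 * X = 1 / (real k * (real k + 1) * (t + ln (real k + 1/2))^2)"
    unfolding g0_def w_def m_def X_def by simp
  moreover have "(g0 - g1*m) * X + g1 * L = g0 * X + g1 * (L - m * X)"
    by (simp add: algebra_simps)
  ultimately show ?thesis by (smt (verit))
qed

lemma eta_term_le_integral:
  assumes k: "k \<ge> 1" and t: "t + ln (real k) > 0"
  shows "eta_term t k \<le> integral {real k..real k + 1} (eta_integrand t) / 24"
proof -
  have c: "t + ln (real k + 1/2) > 0" by (rule shifted_ln_pos_mono[OF _ _ t]) (use k in auto)
  have "eta_term t k \<le> 1 / (24 * real k * (real k + 1) * (t + ln (real k + 1/2))^2)"
    by (rule eta_term_upper[OF c k])
  also have "\<dots> = (1 / (real k * (real k + 1) * (t + ln (real k + 1/2))^2)) / 24" by simp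
  also have "\<dots> \<le> integral {real k..real k + 1} (eta_integrand t) / 24"
    by (intro divide_right_mono integral_eta_integrand_unit_lower[OF k t]) simp
  finally show ?thesis .
qed

lemma eta_term_ge_integral:
  assumes k: "k \<ge> 1" and t: "t + ln (real k) > 0"
  shows "eta_term t k \<ge> integral {real k + 1..real k + 1 + 1} (eta_integrand t) / 24"
proof -
  have c: "t + ln (real k + 1/2) > 0" by (rule shifted_ln_pos_mono[OF _ _ t]) (use k in auto)
  have a: "real k > 0" using k by simp
  have intf: "eta_integrand t integrable_on {real k + 1..real k + 1 + 1}"
    by (rule integrable_continuous_interval,
        rule continuous_on_subset[OF continuous_on_eta_integrand(1)[OF a t]]) auto
  have "integral {real k + 1..real k + 1 + 1} (eta_integrand t)
      \<le> integral {real k + 1..real k + 1 + 1} (\<lambda>x. eta_integrand t (real k + 1))"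
  proof (rule integral_le[OF intf integrable_const_ivl])
    have "t + ln (real k + 1) > 0" by (rule shifted_ln_pos_mono[OF _ _ t]) (use k in auto)
    thus "eta_integrand t x \<le> eta_integrand t (real k + 1)" if "x \<in> {real k + 1..real k + 1 + 1}" for x
      using that by (intro eta_integrand_antimono(1)) auto
  qed
  thus ?thesis using eta_term_lower[OF c k] by simp
qed

lemma eta_part_eq_sum_shift:
  assumes "N \<ge> 1"
  shows "eta_part t N (N + d - 1) = (\<Sum>j<d. eta_term t (N + j))"
proof -
  have "{N..N + d - 1} = {0 + N..<d + N}" using assms by auto
  hence "eta_part t N (N + d - 1) = sum (eta_term t) {0 + N..<d + N}"
    by (simp add: eta_part_eq_sum)
  also have "\<dots> = (\<Sum>j = 0..<d. eta_term t (j + N))" by (rule sum.shift_bounds_nat_ivl)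
  finally show ?thesis by (simp add: atLeast0LessThan add.commute)
qed

lemma shifted_ln_pos_nat_mono:
  assumes "N \<ge> 1" "t + ln (real N) > 0" "N \<le> k"
  shows "k \<ge> 1" "t + ln (real k) > 0" "t + ln (real k + 1/2) > 0" "t + ln (real k + 1) > 0"
proof -
  show "k \<ge> 1" using assms by simp
  show "t + ln (real k) > 0" "t + ln (real k + 1/2) > 0" "t + ln (real k + 1) > 0"
    by (rule shifted_ln_pos_mono[OF _ _ assms(2)]; use assms in simp)+
qed

lemma eta_term_pos_from:
  assumes "N \<ge> 1" "t + ln (real N) > 0" "N \<le> k"
  shows "eta_term t k > 0"
  by (rule eta_term_pos[OF shifted_ln_pos_nat_mono(3)[OF assms]])

lemma eta_term_sums:
  assumes M: "M \<ge> 1" "t + ln (real M) > 0"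
  shows "(\<lambda>j. eta_term t (M + j)) sums eta t M"
    and "(\<lambda>n. eta_part t M n) \<longlonglongrightarrow> eta t M"
proof -
  define T where "T j = eta_term t (M + j)" for j
  have "(\<lambda>j. integral {real M + real j..real M + real j + 1} (eta_integrand t))
      sums integral {real M..} (eta_integrand t)"
    by (rule eta_integrand_improper(3)) (use M in auto)
  hence "summable (\<lambda>j. integral {real M + real j..real M + real j + 1} (eta_integrand t) / 24)"
    by (rule sums_summable[OF sums_divide])
  hence sT: "summable T"
  proof (rule summable_comparison_test')
    fix j :: nat
    have k: "M + j \<ge> 1" "t + ln (real (M + j)) > 0"
      using shifted_ln_pos_nat_mono[OF M, of "M + j"] by auto
    have "0 < T j" unfolding T_def by (rule eta_term_pos_from[OF M]) simp
    moreover have "T j \<le> integral {real M + real j..real M + real j + 1} (eta_integrand t) / 24"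
      using eta_term_le_integral[OF k] unfolding T_def by simp
    ultimately show "norm (T j) \<le> integral {real M + real j..real M + real j + 1} (eta_integrand t) / 24"
      by simp
  qed
  have "eta_part t M (n + M) = (\<Sum>j<Suc n. T j)" for n
  proof -
    have "n + M = M + Suc n - 1" by simp
    thus ?thesis unfolding T_def using eta_part_eq_sum_shift[OF M(1), of t "Suc n"] by metis
  qed
  moreover have "(\<lambda>n. \<Sum>j<Suc n. T j) \<longlonglongrightarrow> suminf T"
    using LIMSEQ_Suc[OF summable_LIMSEQ[OF sT]] by simp
  ultimately have "(\<lambda>n. eta_part t M (n + M)) \<longlonglongrightarrow> suminf T" by presburger
  hence lim: "(\<lambda>n. eta_part t M n) \<longlonglongrightarrow> suminf T" by (rule LIMSEQ_offset)
  hence "eta t M = suminf T" unfolding eta_def by (rule limI)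
  thus "(\<lambda>n. eta_part t M n) \<longlonglongrightarrow> eta t M" "T sums eta t M"
    using lim summable_sums[OF sT] by simp_all
qed

lemma eta_pos:
  assumes "M \<ge> 1" "t + ln (real M) > 0"
  shows "eta t M > 0"
proof -
  note s = eta_term_sums(1)[OF assms]
  have "eta_term t (M + j) > 0" for j using eta_term_pos_from[OF assms] by simp
  from suminf_pos[OF sums_summable[OF s] this] show ?thesis using sums_unique[OF s] by simp
qed

lemma eta_integral_bounds:
  assumes M: "M \<ge> 1" "t + ln (real M) > 0"
  shows "eta_integrand t integrable_on {real M..}"
    and "eta_integrand t integrable_on {real M + 1..}"
    and "integral {real M + 1..} (eta_integrand t) / 24 \<le> eta t M"
    and "eta t M \<le> integral {real M..} (eta_integrand t) / 24"
proof -
  have k: "M + j \<ge> 1" "t + ln (real (M + j)) > 0" for j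
    using shifted_ln_pos_nat_mono[OF M, of "M + j"] by auto
  have M1: "0 < real M + 1" "t + ln (real M + 1) > 0"
    using shifted_ln_pos_nat_mono(4)[OF M order.refl] by auto
  note I0 = eta_integrand_improper[of "real M" t] and I1 = eta_integrand_improper[OF M1]
  show "eta_integrand t integrable_on {real M..}" "eta_integrand t integrable_on {real M + 1..}"
    using I0 I1 M by auto
  show "integral {real M + 1..} (eta_integrand t) / 24 \<le> eta t M"
  proof (rule sums_le[OF _ sums_divide[OF I1(3)] eta_term_sums(1)[OF M]])
    show "integral {real M + 1 + real j..real M + 1 + real j + 1} (eta_integrand t) / 24
        \<le> eta_term t (M + j)" for j
      using eta_term_ge_integral[OF k(1)[of j] k(2)[of j]] by (simp add: add_ac)
  qed
  show "eta t M \<le> integral {real M..} (eta_integrand t) / 24"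
  proof (rule sums_le[OF _ eta_term_sums(1)[OF M] sums_divide[OF I0(3)]])
    show "eta_term t (M + j) \<le> integral {real M + real j..real M + real j + 1} (eta_integrand t) / 24"
      for j using eta_term_le_integral[OF k(1)[of j] k(2)[of j]] by simp
  qed (use M in auto)
qed

lemma eta_bounds:
  assumes M: "M \<ge> 1" "t + ln (real M) > 0"
  shows "1 / (24 * (real M + 1) * (t + ln (real M + 1))^2)
           - 1 / (12 * (real M + 1) * (t + ln (real M + 1))^3) < eta t M"
    and "eta t M < 1 / (24 * real M * (t + ln (real M))^2)"
proof -
  define A where "A = real M + 1"
  define u where "u = t + ln A"
  have M1: "0 < A" "t + ln A > 0"
    unfolding A_def using shifted_ln_pos_nat_mono(4)[OF M order.refl] by auto
  have "1 / (A * u^2) - 2 / (A * u^3) < integral {A..} (eta_integrand t)"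
    using integral_eta_integrand_bounds(1)[OF M1] unfolding u_def .
  hence "1 / (24 * A * u^2) - 1 / (12 * A * u^3) < integral {A..} (eta_integrand t) / 24" by simp
  also have "\<dots> \<le> eta t M" unfolding A_def by (rule eta_integral_bounds(3)[OF M])
  finally show "1 / (24 * (real M + 1) * (t + ln (real M + 1))^2)
           - 1 / (12 * (real M + 1) * (t + ln (real M + 1))^3) < eta t M"
    unfolding u_def A_def .
  have "eta t M \<le> integral {real M..} (eta_integrand t) / 24" by (rule eta_integral_bounds(4)[OF M])
  also have "\<dots> < (1 / (real M * (t + ln (real M))^2)) / 24"
    using integral_eta_integrand_bounds(2)[of "real M" t] M by simp
  finally show "eta t M < 1 / (24 * real M * (t + ln (real M))^2)" by simp
qed

lemma eta_diff_eta_part: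
  assumes N: "N \<ge> 1" "t + ln (real N) > 0" and n: "N \<le> n"
  shows "eta t N - eta_part t N (n - 1) = eta t n"
proof -
  have n': "n \<ge> 1" "t + ln (real n) > 0"
    using shifted_ln_pos_nat_mono[OF N n] by auto
  have "(\<lambda>i. eta_term t (N + (i + (n - N)))) sums (eta t N - (\<Sum>i<n - N. eta_term t (N + i)))"
    by (rule sums_split_initial_segment[OF eta_term_sums(1)[OF N]])
  moreover have "(\<lambda>i. eta_term t (N + (i + (n - N)))) = (\<lambda>i. eta_term t (n + i))"
    using n by (simp add: add_ac)
  moreover have "(\<Sum>i<n - N. eta_term t (N + i)) = eta_part t N (n - 1)"
    using eta_part_eq_sum_shift[OF N(1), of t "n - N"] n by simp
  ultimately show ?thesis using sums_unique2 eta_term_sums(1)[OF n'] by metis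
qed

lemma eta_part_pos:
  assumes "N \<ge> 1" "t + ln (real N) > 0" "N \<le> n"
  shows "eta_part t N n > 0"
  unfolding eta_part_eq_sum using assms by (intro sum_pos eta_term_pos_from) auto

lemma eta_part_less_Suc:
  assumes "N \<ge> 1" "t + ln (real N) > 0" "N \<le> n"
  shows "eta_part t N n < eta_part t N (Suc n)"
proof -
  have "eta_part t N (Suc n) = eta_part t N n + eta_term t (Suc n)"
    unfolding eta_part_eq_sum using assms by (simp add: sum.cl_ivl_Suc)
  thus ?thesis using eta_term_pos_from[OF assms(1,2), of "Suc n"] assms by simp
qed

lemma eta_part_less_eta:
  assumes N: "N \<ge> 1" "t + ln (real N) > 0" and "N \<le> n"
  shows "eta_part t N n < eta t N"
proof -
  have n: "Suc n \<ge> 1" "t + ln (real (Suc n)) > 0"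
    using shifted_ln_pos_nat_mono[OF N, of "Suc n"] assms(3) by auto
  show ?thesis using eta_diff_eta_part[OF N, of "Suc n"] eta_pos[OF n] assms by simp
qed

lemma eta_tail_asymp_equiv:
  assumes N: "N \<ge> 1" "t + ln (real N) > 0"
  shows "(\<lambda>n. eta t N - eta_part t N (n - 1)) \<sim>[at_top] (\<lambda>n. 1 / (24 * real n * (ln (real n))^2))"
proof (rule asymp_equiv_sandwich_real)
  show "(\<lambda>n. 1 / (24 * (real n + 1) * (t + ln (real n + 1))^2)
            - 1 / (12 * (real n + 1) * (t + ln (real n + 1))^3))
        \<sim>[at_top] (\<lambda>n. 1 / (24 * real n * (ln (real n))^2))"
    by (rule asymp_equivI') real_asymp
  show "(\<lambda>n. 1 / (24 * real n * (t + ln (real n))^2)) \<sim>[at_top] (\<lambda>n. 1 / (24 * real n * (ln (real n))^2))"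
    by (rule asymp_equivI') real_asymp
  show "eventually (\<lambda>n. eta t N - eta_part t N (n - 1) \<in>
          {1 / (24 * (real n + 1) * (t + ln (real n + 1))^2)
             - 1 / (12 * (real n + 1) * (t + ln (real n + 1))^3)
           ..1 / (24 * real n * (t + ln (real n))^2)}) at_top"
    using eventually_ge_at_top[of N]
  proof eventually_elim
    case (elim n)
    have "n \<ge> 1" "t + ln (real n) > 0"
      using shifted_ln_pos_nat_mono[OF N elim] by auto
    note b = eta_bounds[OF this]
    show ?case
      unfolding eta_diff_eta_part[OF N elim] atLeastAtMost_iff using b by (intro conjI less_imp_le)
  qed
qed

lemma eta_le_inverse_square:
  assumes M: "M \<ge> 1" and s: "s \<ge> 1"
  shows "\<bar>eta s M\<bar> \<le> (1/24) / (real M * s^2)"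
proof -
  have l: "ln (real M) \<ge> 0" using M by simp
  hence ms: "s + ln (real M) > 0" using s by linarith
  have "\<bar>eta s M\<bar> = eta s M" using eta_pos[OF M ms] by simp
  also have "\<dots> < 1 / (24 * real M * (s + ln (real M))^2)" by (rule eta_bounds(2)[OF M ms])
  also have "\<dots> \<le> 1 / (24 * real M * s^2)"
    using M s l ms by (intro divide_left_mono mult_left_mono power_mono mult_pos_pos) auto
  finally show ?thesis by simp
qed

theorem proposition3p4:
  fixes N :: nat and t :: real
  assumes hN: "N \<ge> 1" and ht: "t > - ln (real N)"
  shows
    "(\<forall>n\<ge>N. eta_part t N n > 0)
     \<and> (\<forall>n\<ge>N. eta_part t N n < eta_part t N (Suc n))
     \<and> (\<exists>B. \<forall>n\<ge>N. eta_part t N n \<le> B)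
     \<and> (\<lambda>n. eta_part t N n) \<longlonglongrightarrow> eta t N
     \<and> eta t N > 0
     \<and> (\<forall>n\<ge>N. eta t N - eta_part t N (n - 1) = eta t n
          \<and> eta_integrand t integrable_on {real n..}
          \<and> eta_integrand t integrable_on {real n + 1..}
          \<and> integral {real n + 1..} (eta_integrand t) / 24 \<le> eta t n
          \<and> eta t n \<le> integral {real n..} (eta_integrand t) / 24)
     \<and> (\<forall>n\<ge>N.
          1 / (24 * (real n + 1) * (t + ln (real n + 1))^2)
            - 1 / (12 * (real n + 1) * (t + ln (real n + 1))^3)
          < eta t N - eta_part t N (n - 1)
          \<and> eta t N - eta_part t N (n - 1) < 1 / (24 * real n * (t + ln (real n))^2))
     \<and> (\<lambda>n. eta t N - eta_part t N (n - 1)) \<sim>[at_top] (\<lambda>n. 1 / (24 * real n * (ln (real n))^2))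
     \<and> (\<exists>C T. \<forall>M::nat. \<forall>s::real. M \<ge> 1 \<longrightarrow> s \<ge> T \<longrightarrow>
          \<bar>eta s M\<bar> \<le> C / (real M * s^2))"
proof -
  have N: "N \<ge> 1" "t + ln (real N) > 0" using hN ht by auto
  have n: "n \<ge> 1" "t + ln (real n) > 0" if "N \<le> n" for n
    using shifted_ln_pos_nat_mono[OF N that] by auto
  have bounded: "\<exists>B. \<forall>n\<ge>N. eta_part t N n \<le> B"
    using eta_part_less_eta[OF N] less_imp_le by blast
  have tail: "\<forall>n\<ge>N. eta t N - eta_part t N (n - 1) = eta t n
          \<and> eta_integrand t integrable_on {real n..}
          \<and> eta_integrand t integrable_on {real n + 1..}
          \<and> integral {real n + 1..} (eta_integrand t) / 24 \<le> eta t n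
          \<and> eta t n \<le> integral {real n..} (eta_integrand t) / 24"
    using eta_diff_eta_part[OF N] eta_integral_bounds[OF n] by simp
  have tail_bounds: "\<forall>n\<ge>N.
          1 / (24 * (real n + 1) * (t + ln (real n + 1))^2)
            - 1 / (12 * (real n + 1) * (t + ln (real n + 1))^3)
          < eta t N - eta_part t N (n - 1)
          \<and> eta t N - eta_part t N (n - 1) < 1 / (24 * real n * (t + ln (real n))^2)"
    using eta_diff_eta_part[OF N] eta_bounds[OF n] by simp
  have decay: "\<exists>C T. \<forall>M::nat. \<forall>s::real. M \<ge> 1 \<longrightarrow> s \<ge> T \<longrightarrow>
          \<bar>eta s M\<bar> \<le> C / (real M * s^2)"
    using eta_le_inverse_square by blast
  show ?thesis
    using eta_part_pos[OF N] eta_part_less_Suc[OF N] bounded eta_term_sums(2)[OF N] eta_pos[OF N]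
      tail tail_bounds eta_tail_asymp_equiv[OF N] decay by blast
qed

end
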